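(* For any integers $k\ge2$, $n\ge1$, any $k$-dimensional polytope $P$ and any $n$ positions $p_1,\dots,p_n\in P$, there exists a position $p\in P$ such that $\min_{i\in[n]}\{dis(p,p_i),dis(p,\partial P)\}\ge\frac{Disp(n;P)}{2}$.
   Context: $dis$ is Euclidean distance and $\partial P$ is the boundary of $P$. For integer $n\ge1$, $Disp(n;P)=\max_{X_1,\dots,X_n\in P}\min\{dis(X_i,\partial P),dis(X_i,X_j): i,j\in[n],i\ne j\}$. *)

theory Defs
  imports "HOL-Analysis.Analysis"
begin

text \<open>The maximum is
  rendered as a supremum (it is attained for compact P).\<close>

definition Disp :: "nat \<Rightarrow> ('a::euclidean_space) set \<Rightarrow> real" where
  "Disp n P = Sup { Min ({infdist (X i) (frontier P) | i. i < n}
                        \<union> {dist (X i) (X j) | i j. i < n \<and> j < n \<and> i \<noteq> j})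
                   | X :: nat \<Rightarrow> 'a. \<forall>i<n. X i \<in> P }"

end

theory Submission
  imports Defs
begin

text \<open>Take a configuration X of n points whose boundary distances and mutual distances all
  exceed d. Shift every X i by d/2 against a unit vector u and add one more point, the
  u-extreme point X a shifted by d/2 along u: this gives n + 1 points of P at distance
  \<ge> d/2 from the boundary and pairwise \<ge> d apart. Two of them cannot share the same
  nearest p i within d/2, so by pigeonhole one of them is at distance \<ge> d/2 from all p i.
  Letting d tend to Disp(n;P), compactness of P yields the point q.\<close>

lemma mem_if_dist_lt_infdist_frontier:
  fixes x y :: "'a::euclidean_space"
  assumes "x \<in> S" and "dist x y < infdist x (frontier S)"
  shows "y \<in> S"
proof (rule ccontr)
  assume "y \<notin> S"
  then obtain z where z: "z \<in> closed_segment x y" "z \<in> frontier S"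
    using connected_Int_frontier[of "closed_segment x y" S] assms(1) by blast
  have "infdist x (frontier S) \<le> dist x z"
    using infdist_le[OF z(2)] .
  also have "\<dots> \<le> dist x y"
    using dist_in_closed_segment[OF z(1)] by (simp add: dist_commute)
  finally show False
    using assms(2) by simp
qed

lemma exists_point_far_from_all:
  fixes Y :: "nat \<Rightarrow> 'a::metric_space" and p :: "nat \<Rightarrow> 'a"
  assumes "\<forall>j\<le>n. \<forall>j'\<le>n. j \<noteq> j' \<longrightarrow> d \<le> dist (Y j) (Y j')"
  shows "\<exists>j\<le>n. \<forall>i<n. d/2 \<le> dist (Y j) (p i)"
proof (rule ccontr)
  assume "\<not> ?thesis"
  then obtain h where h: "\<forall>j\<in>{..n}. h j < n \<and> dist (Y j) (p (h j)) < d/2"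
    by (metis atMost_iff not_le)
  have "\<not> inj_on h {..n}"
  proof
    assume "inj_on h {..n}"
    moreover have "h ` {..n} \<subseteq> {..<n}"
      using h by auto
    ultimately have "card {..n} \<le> card {..<n}"
      by (meson card_inj_on_le finite_lessThan)
    then show False
      by simp
  qed
  then obtain j j' where jj: "j \<le> n" "j' \<le> n" "j \<noteq> j'" "h j = h j'"
    unfolding inj_on_def by blast
  have "dist (Y j) (Y j') \<le> dist (Y j) (p (h j)) + dist (Y j') (p (h j'))"
    using jj(4) by (metis dist_commute dist_triangle)
  also have "\<dots> < d"
    using h jj by (metis atMost_iff field_sum_of_halves add_strict_mono)
  finally show False
    using assms jj(1-3) by fastforce
qed

lemma extend_separated_points:
  fixes X :: "nat \<Rightarrow> 'a::euclidean_space"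
  assumes "n \<ge> 1" and "0 \<le> d"
    and sep: "\<forall>i<n. \<forall>j<n. i \<noteq> j \<longrightarrow> d < dist (X i) (X j)"
  obtains Y where "\<forall>j\<le>n. \<exists>i<n. dist (X i) (Y j) \<le> d/2"
    and "\<forall>j\<le>n. \<forall>j'\<le>n. j \<noteq> j' \<longrightarrow> d \<le> dist (Y j) (Y j')"
proof -
  obtain u :: 'a where u: "norm u = 1"
    using nonempty_Basis norm_Basis by blast
  obtain a where a: "a < n" "\<forall>j<n. u \<bullet> X j \<le> u \<bullet> X a"
  proof -
    let ?V = "(\<lambda>j. u \<bullet> X j) ` {..<n}"
    have "Max ?V \<in> ?V"
      using assms(1) by (intro Max_in) (auto simp: lessThan_empty_iff)
    then obtain a where "a < n" "Max ?V = u \<bullet> X a"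
      by auto
    moreover have "\<forall>j<n. u \<bullet> X j \<le> Max ?V"
      by simp
    ultimately show thesis
      using that by metis
  qed
  define Y where "Y j = (if j < n then X j - (d/2) *\<^sub>R u else X a + (d/2) *\<^sub>R u)" for j
  have near: "\<exists>i<n. dist (X i) (Y j) \<le> d/2" for j
    using a(1) u assms(2) by (cases "j < n") (auto simp: Y_def dist_norm)
  have last_far: "d \<le> dist (Y j) (Y n)" if "j < n" for j
  proof -
    have "Y n - Y j = (X a - X j) + d *\<^sub>R u"
      using that by (simp add: Y_def algebra_simps flip: scaleR_add_left)
    then have "u \<bullet> (Y n - Y j) = u \<bullet> X a - u \<bullet> X j + d"
      using u by (simp add: inner_diff_right inner_add_right dot_square_norm)
    then have "d \<le> u \<bullet> (Y n - Y j)"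
      using a(2) that by auto
    also have "\<dots> \<le> norm u * norm (Y n - Y j)"
      by (rule norm_cauchy_schwarz)
    finally show ?thesis
      using u by (simp add: dist_norm norm_minus_commute)
  qed
  have "d \<le> dist (Y j) (Y j')" if "j \<le> n" "j' \<le> n" "j \<noteq> j'" for j j'
  proof (cases "j < n \<and> j' < n")
    case True
    then show ?thesis
      using sep that by (simp add: Y_def dist_norm less_imp_le)
  next
    case False
    then show ?thesis
      using last_far that by (metis dist_commute le_neq_implies_less)
  qed
  then show thesis
    using that near by blast
qed

lemma continuous_on_Min_image:
  fixes f :: "'i \<Rightarrow> 'a::topological_space \<Rightarrow> 'b::linorder_topology"
  assumes "finite I" "I \<noteq> {}" "\<And>i. i \<in> I \<Longrightarrow> continuous_on S (f i)"
  shows "continuous_on S (\<lambda>x. Min ((\<lambda>i. f i x) ` I))"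
  using assms
proof (induction I rule: finite_ne_induct)
  case (singleton i)
  then show ?case by simp
next
  case (insert i I)
  then show ?case
    by (simp add: continuous_on_min)
qed

lemma compact_continuous_attains_ge:
  fixes g :: "'a::topological_space \<Rightarrow> real"
  assumes "compact S" "S \<noteq> {}" "continuous_on S g"
    and approx: "\<And>e. e < c \<Longrightarrow> \<exists>y\<in>S. e \<le> g y"
  shows "\<exists>q\<in>S. c \<le> g q"
proof -
  obtain q where q: "q \<in> S" "\<forall>y\<in>S. g y \<le> g q"
    using continuous_attains_sup[OF assms(1-3)] by blast
  have "c \<le> g q"
  proof (rule ccontr)
    assume "\<not> c \<le> g q"
    then obtain y where "y \<in> S" "(g q + c) / 2 \<le> g y"
      using approx[of "(g q + c) / 2"] by auto
    then show False
      using q \<open>\<not> c \<le> g q\<close> by fastforce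
  qed
  then show ?thesis
    using q(1) by blast
qed

lemma configuration_if_less_Disp:
  fixes P :: "'a::euclidean_space set"
  assumes "n \<ge> 1" "P \<noteq> {}" "d < Disp n P"
  obtains X where "\<forall>i<n. X i \<in> P" "\<forall>i<n. d < infdist (X i) (frontier P)"
    "\<forall>i<n. \<forall>j<n. i \<noteq> j \<longrightarrow> d < dist (X i) (X j)"
proof -
  define F where "F X = {infdist (X i) (frontier P) | i. i < n}" for X :: "nat \<Rightarrow> 'a"
  define D where "D X = {dist (X i) (X j) | i j. i < n \<and> j < n \<and> i \<noteq> j}" for X :: "nat \<Rightarrow> 'a"
  obtain x where "x \<in> P"
    using assms(2) by blast
  then have "{Min (F X \<union> D X) | X. \<forall>i<n. X i \<in> P} \<noteq> {}"
    by auto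
  moreover have "d < Sup {Min (F X \<union> D X) | X. \<forall>i<n. X i \<in> P}"
    using assms(3) unfolding Disp_def F_def D_def .
  ultimately obtain s where "s \<in> {Min (F X \<union> D X) | X. \<forall>i<n. X i \<in> P}" "d < s"
    by (meson less_cSupD)
  then obtain X where X: "\<forall>i<n. X i \<in> P" "d < Min (F X \<union> D X)"
    by blast
  have "D X \<subseteq> (\<lambda>(i, j). dist (X i) (X j)) ` ({..<n} \<times> {..<n})"
    unfolding D_def by auto
  then have "finite (F X \<union> D X)"
    unfolding F_def by (auto intro: finite_subset)
  moreover have "F X \<noteq> {}"
    using assms(1) unfolding F_def by (auto intro!: exI[of _ 0])
  ultimately have "\<forall>a \<in> F X \<union> D X. d < a"
    using X(2) by simp
  then show thesis
    using that X(1) unfolding F_def D_def by blast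
qed

lemma far_point_if_less_Disp:
  fixes P :: "'a::euclidean_space set" and p :: "nat \<Rightarrow> 'a"
  assumes "n \<ge> 1" "P \<noteq> {}" "0 \<le> d" "d < Disp n P"
  shows "\<exists>q\<in>P. d/2 \<le> infdist q (frontier P) \<and> (\<forall>i<n. d/2 \<le> dist q (p i))"
proof -
  obtain X where XP: "\<forall>i<n. X i \<in> P" and Xf: "\<forall>i<n. d < infdist (X i) (frontier P)"
    and Xsep: "\<forall>i<n. \<forall>j<n. i \<noteq> j \<longrightarrow> d < dist (X i) (X j)"
    using configuration_if_less_Disp[OF assms(1,2,4)] by blast
  obtain Y where near: "\<forall>j\<le>n. \<exists>i<n. dist (X i) (Y j) \<le> d/2"
    and Ysep: "\<forall>j\<le>n. \<forall>j'\<le>n. j \<noteq> j' \<longrightarrow> d \<le> dist (Y j) (Y j')"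
    using extend_separated_points[OF assms(1,3) Xsep] by blast
  obtain j where j: "j \<le> n" "\<forall>i<n. d/2 \<le> dist (Y j) (p i)"
    using exists_point_far_from_all[OF Ysep] by blast
  obtain i where i: "i < n" "dist (X i) (Y j) \<le> d/2"
    using near j(1) by blast
  have "Y j \<in> P"
    using mem_if_dist_lt_infdist_frontier[of "X i" P "Y j"] XP Xf i assms(3) by fastforce
  moreover have "d/2 \<le> infdist (Y j) (frontier P)"
    using infdist_triangle[of "X i" "frontier P" "Y j"] Xf i(2) \<open>i < n\<close> by fastforce
  ultimately show ?thesis
    using j(2) by blast
qed

theorem lemma4:
  fixes P :: "(real ^ 'k) set" and n :: nat and p :: "nat \<Rightarrow> real ^ 'k"
  assumes "CARD('k) \<ge> 2"
    and "n \<ge> 1"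
    and "polytope P"
    and "aff_dim P = int CARD('k)"
    and "\<forall>i<n. p i \<in> P"
  shows "\<exists>q\<in>P. Min ({dist q (p i) | i. i < n} \<union> {infdist q (frontier P)}) \<ge> Disp n P / 2"
proof -
  define g where "g q = min (infdist q (frontier P)) (Min ((\<lambda>i. dist q (p i)) ` {..<n}))" for q
  have g_eq: "Min ({dist q (p i) | i. i < n} \<union> {infdist q (frontier P)}) = g q" for q
  proof -
    have "{dist q (p i) | i. i < n} \<union> {infdist q (frontier P)}
          = insert (infdist q (frontier P)) ((\<lambda>i. dist q (p i)) ` {..<n})"
      by auto
    then show ?thesis
      using assms(2) by (simp add: g_def Min_insert lessThan_empty_iff)
  qed
  have "P \<noteq> {}"
    using assms(4) by auto
  have "continuous_on P g"
    unfolding g_def using assms(2)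
    by (intro continuous_on_min continuous_on_Min_image continuous_on_infdist continuous_intros)
      (auto simp: lessThan_empty_iff)
  moreover have "\<exists>y\<in>P. e \<le> g y" if e: "e < Disp n P / 2" for e
  proof (cases "e \<le> 0")
    case True
    have "0 \<le> g y" for y
      using assms(2) by (simp add: g_def infdist_nonneg lessThan_empty_iff)
    then show ?thesis
      using True \<open>P \<noteq> {}\<close> by (meson all_not_in_conv order_trans)
  next
    case False
    then obtain y where "y \<in> P" "e \<le> infdist y (frontier P)" "\<forall>i<n. e \<le> dist y (p i)"
      using far_point_if_less_Disp[of n P "2 * e" p] assms(2) \<open>P \<noteq> {}\<close> e by force
    then show ?thesis
      using assms(2) by (auto simp: g_def lessThan_empty_iff)
  qed
  ultimately show ?thesis
    unfolding g_eq by (rule compact_continuous_attains_ge[OF polytope_imp_compact[OF assms(3)] \<open>P \<noteq> {}\<close>])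
qed

end
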